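(* Let $F$ be a free non-abelian group and let $\mathcal K$ be the class of coordinate groups $F_{R(U)}$ of finite systems $U(X)=1$ over $F$ such that every equation $T(X,Y)=1$ over $F$ compatible with $U=1$ admits a $U$-lift. Let $G=F_{R(S)}\in\mathcal K$ and let $H$ be a finitely generated subgroup of $G$ with $F\le H$ such that there is a retraction $\phi:G\to H$ (a homomorphism with $\phi|_H=\mathrm{id}_H$). Then $H=F_{R(U)}$ for some finite system $U=1$ over $F$ and every equation compatible with $U=1$ admits a $U$-lift; in particular $H\in\mathcal K$.
   Context: $F[X]=F*F(X)$; $R(U)$ is the intersection of kernels of all $F$-homomorphisms $F[X]\to F$ killing $U$; $F_{R(U)}=F[X]/R(U)$ with canonical map $\mu:X\to F_{R(U)}$. $T(X,Y)=1$ is compatible with $U=1$ if for every solution $X_0$ of $U=1$ in $F$, $T(X_0,Y)=1$ has a solution in $F$; it admits a $U$-lift if $T(X^\mu,Y)=1$ has a solution in $F_{R(U)}$. *)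

theory Defs
  imports "HOL-Algebra.Algebra"
begin

type_synonym 'g word = "(bool \<times> 'g) list"
  (* (True, g) is the letter g, (False, g) is g^-1 *)

fun reduced :: "'g word \<Rightarrow> bool" where
  "reduced [] = True"
| "reduced [a] = True"
| "reduced (a # b # w) = (\<not> (snd a = snd b \<and> fst a \<noteq> fst b) \<and> reduced (b # w))"

fun push :: "bool \<times> 'g \<Rightarrow> 'g word \<Rightarrow> 'g word" where
  "push a [] = [a]"
| "push a (b # bs) = (if snd a = snd b \<and> fst a \<noteq> fst b then bs else a # b # bs)"

definition reduce :: "'g word \<Rightarrow> 'g word" where
  "reduce w = foldr push w []"

definition free_group :: "'g set \<Rightarrow> 'g word monoid" where
  "free_group A = \<lparr> carrier = {w. reduced w \<and> snd ` set w \<subseteq> A},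
                    monoid.mult = (\<lambda>x y. reduce (x @ y)), one = [] \<rparr>"

definition Fgrp :: "'c word monoid" where
  "Fgrp = free_group UNIV"

text \<open>F[X] = F * F(X) for X = {x_0,...,x_(n-1)}: free group on constants Inl c and variables Inr i, i < n.\<close>
definition FX :: "nat \<Rightarrow> ('c + nat) word monoid" where
  "FX n = free_group (range Inl \<union> Inr ` {..<n})"

definition const_word :: "'c word \<Rightarrow> ('c + nat) word" where
  "const_word w = map (\<lambda>(b, c). (b, Inl c)) w"

definition F_hom :: "nat \<Rightarrow> (('c + nat) word \<Rightarrow> 'c word) \<Rightarrow> bool" where
  "F_hom n h \<longleftrightarrow> h \<in> hom (FX n) Fgrp \<and> (\<forall>w \<in> carrier Fgrp. h (const_word w) = w)"

definition Rad :: "nat \<Rightarrow> ('c + nat) word set \<Rightarrow> ('c + nat) word set" where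
  "Rad n U = {w \<in> carrier (FX n). \<forall>h. F_hom n h \<and> (\<forall>u \<in> U. h u = \<one>\<^bsub>Fgrp\<^esub>)
                                       \<longrightarrow> h w = \<one>\<^bsub>Fgrp\<^esub>}"

definition coord :: "nat \<Rightarrow> ('c + nat) word set \<Rightarrow> ('c + nat) word set monoid" where
  "coord n U = FX n Mod Rad n U"

definition canF :: "nat \<Rightarrow> ('c + nat) word set \<Rightarrow> 'c word \<Rightarrow> ('c + nat) word set" where
  "canF n U w = Rad n U #>\<^bsub>FX n\<^esub> const_word w"

definition mu :: "nat \<Rightarrow> ('c + nat) word set \<Rightarrow> nat \<Rightarrow> ('c + nat) word set" where
  "mu n U i = Rad n U #>\<^bsub>FX n\<^esub> [(True, Inr i)]"

definition word_eval :: "('a, 'b) monoid_scheme \<Rightarrow> ('g \<Rightarrow> 'a) \<Rightarrow> 'g word \<Rightarrow> 'a" where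
  "word_eval G f w = foldr (\<lambda>(b, g) acc. (if b then f g else inv\<^bsub>G\<^esub> (f g)) \<otimes>\<^bsub>G\<^esub> acc) w \<one>\<^bsub>G\<^esub>"

text \<open>Value of an equation w (over F, in variables Inr i) in an F-group G, where iota : F -> G is
  the structure map and val assigns values to the variables.\<close>
definition eqn_eval :: "('a, 'b) monoid_scheme \<Rightarrow> ('c word \<Rightarrow> 'a) \<Rightarrow> (nat \<Rightarrow> 'a)
                         \<Rightarrow> ('c + nat) word \<Rightarrow> 'a" where
  "eqn_eval G iota val w = word_eval G (case_sum (\<lambda>c. iota [(True, c)]) val) w"

text \<open>T(X,Y) with X = x_0..x_(n-1), Y = x_n..x_(n+m-1); T is an element of F[X,Y] = FX (n+m).\<close>
definition compatible :: "nat \<Rightarrow> ('c + nat) word set \<Rightarrow> nat \<Rightarrow> ('c + nat) word \<Rightarrow> bool" where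
  "compatible n U m T \<longleftrightarrow>
     (\<forall>X0. (\<forall>i<n. X0 i \<in> carrier Fgrp) \<and> (\<forall>u \<in> U. eqn_eval Fgrp id X0 u = \<one>\<^bsub>Fgrp\<^esub>) \<longrightarrow>
        (\<exists>Y0. (\<forall>i. n \<le> i \<and> i < n + m \<longrightarrow> Y0 i \<in> carrier Fgrp) \<and>
              eqn_eval Fgrp id (\<lambda>i. if i < n then X0 i else Y0 i) T = \<one>\<^bsub>Fgrp\<^esub>))"

definition admits_lift :: "nat \<Rightarrow> ('c + nat) word set \<Rightarrow> nat \<Rightarrow> ('c + nat) word \<Rightarrow> bool" where
  "admits_lift n U m T \<longleftrightarrow>
     (\<exists>Y0. (\<forall>i. n \<le> i \<and> i < n + m \<longrightarrow> Y0 i \<in> carrier (coord n U)) \<and>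
           eqn_eval (coord n U) (canF n U) (\<lambda>i. if i < n then mu n U i else Y0 i) T
             = \<one>\<^bsub>coord n U\<^esub>)"

definition lift_property :: "nat \<Rightarrow> ('c + nat) word set \<Rightarrow> bool" where
  "lift_property n U \<longleftrightarrow>
     (\<forall>m T. T \<in> carrier (FX (n + m)) \<and> compatible n U m T \<longrightarrow> admits_lift n U m T)"

definition finite_system :: "nat \<Rightarrow> ('c + nat) word set \<Rightarrow> bool" where
  "finite_system n U \<longleftrightarrow> finite U \<and> U \<subseteq> carrier (FX n)"

end

theory Submission
  imports Defs
begin

(* Choose words p_i with phi(mu x_i) = p_i(X) modulo R(S).  Then X0 |-> p(X0) is an idempotent
   polynomial self-map of the solution set V(S), and its image is the solution set of
   U = S \<union> {x_i^-1 p_i}.  A word w lies in R(U) iff w(p(X)) lies in R(S), so w |-> phi(w R(S))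
   induces F_R(U) \<cong> H.  For the lift property, an equation T(X,Y) compatible with U gives the
   equation T(p(X),Y) compatible with S; a lift Y = y(X) of the latter evaluates to 1 on V(U),
   where p is the identity, hence T(X, y(X)) \<in> R(U). *)

section \<open>Free groups of reduced words\<close>

definition inv_letter :: "bool \<times> 'g \<Rightarrow> bool \<times> 'g" where "inv_letter a = (\<not> fst a, snd a)"

lemma reduced_Cons: "reduced (a # w) \<longleftrightarrow> reduced w \<and> (w = [] \<or> \<not> (snd a = snd (hd w) \<and> fst a \<noteq> fst (hd w)))"
  by (cases w) auto

lemma reduced_push: "reduced w \<Longrightarrow> reduced (push a w)"
  by (cases "(a,w)" rule: push.cases) (auto simp: reduced_Cons)

lemma set_push: "set (push a w) \<subseteq> insert a (set w)"
  by (cases "(a,w)" rule: push.cases) auto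

lemma reduced_foldr: "reduced w \<Longrightarrow> reduced (foldr push r w)"
  by (induction r) (auto intro: reduced_push)

lemma set_foldr: "set (foldr push r w) \<subseteq> set r \<union> set w"
  by (induction r) (use set_push in fastforce)+

lemma reduced_reduce: "reduced (reduce w)"
  unfolding reduce_def by (rule reduced_foldr) simp

lemma reduce_append: "reduce (x @ y) = foldr push x (reduce y)"
  by (simp add: reduce_def)

lemma reduce_Cons: "reduce (a # y) = push a (reduce y)"
  by (simp add: reduce_def)

lemma reduce_reduced: "reduced w \<Longrightarrow> reduce w = w"
proof (induction w)
  case Nil then show ?case by (simp add: reduce_def)
next
  case (Cons a w)
  then have "reduce w = w" by (simp add: reduced_Cons)
  with Cons.prems show ?case by (cases w) (auto simp: reduce_Cons)
qed

lemma push_push_inv: "reduced w \<Longrightarrow> push a (push (inv_letter a) w) = w"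
proof (cases w)
  case Nil then show ?thesis by (auto simp: inv_letter_def)
next
  case (Cons b bs)
  assume r: "reduced w"
  show ?thesis
  proof (cases "snd (inv_letter a) = snd b \<and> fst (inv_letter a) \<noteq> fst b")
    case True
    then show ?thesis using r Cons
      by (cases bs) (auto simp: inv_letter_def prod_eq_iff)
  next
    case False
    then show ?thesis using Cons by (auto simp: inv_letter_def)
  qed
qed

lemma foldr_push_push: "reduced w \<Longrightarrow> foldr push (push c r) w = push c (foldr push r w)"
proof (cases "(c, r)" rule: push.cases)
  case (1 a)
  then show ?thesis by simp
next
  case (2 a b bs)
  assume w: "reduced w"
  show ?thesis
  proof (cases "snd a = snd b \<and> fst a \<noteq> fst b")
    case True
    then have "b = inv_letter c" using 2 by (cases b, cases c) (auto simp: inv_letter_def)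
    then show ?thesis using 2 True
      by (simp add: push_push_inv reduced_foldr w)
  next
    case False then show ?thesis using 2 by auto
  qed
qed

lemma foldr_foldr: "reduced w \<Longrightarrow> foldr push (foldr push a r) w = foldr push a (foldr push r w)"
  by (induction a) (auto simp: foldr_push_push reduced_foldr)

lemma reduce_reduce_left: "reduce (reduce x @ y) = reduce (x @ y)"
  using foldr_foldr[of "reduce y" x "[]"] reduced_reduce[of y] by (simp add: reduce_append reduce_def)

lemma reduce_reduce_right: "reduce (x @ reduce y) = reduce (x @ y)"
  by (simp add: reduce_append reduce_reduced reduced_reduce)

definition inv_word :: "'g word \<Rightarrow> 'g word" where "inv_word w = rev (map inv_letter w)"

lemma foldr_inv_word: "reduced r \<Longrightarrow> foldr push w (foldr push (inv_word w) r) = r"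
proof (induction w arbitrary: r)
  case Nil then show ?case by (simp add: inv_word_def)
next
  case (Cons c w)
  have "foldr push (c # w) (foldr push (inv_word (c # w)) r)
      = push c (foldr push w (foldr push (inv_word w) (push (inv_letter c) r)))"
    by (simp add: inv_word_def)
  also have "\<dots> = push c (push (inv_letter c) r)"
    using Cons by (simp add: reduced_push)
  also have "\<dots> = r" using Cons.prems by (simp add: push_push_inv)
  finally show ?case .
qed

lemma inv_word_inv_word: "inv_word (inv_word w) = w"
  by (simp add: inv_word_def rev_map comp_def inv_letter_def)

lemma reduce_inv_left: "reduced x \<Longrightarrow> reduce (inv_word x @ x) = []"
proof -
  assume x: "reduced x"
  have "reduce (inv_word x @ x) = foldr push (inv_word x) x"
    by (simp add: reduce_append reduce_reduced x)
  also have "\<dots> = foldr push (inv_word x) (foldr push (inv_word (inv_word x)) [])"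
    using reduce_reduced[OF x] by (simp add: inv_word_inv_word reduce_def)
  also have "\<dots> = []" by (rule foldr_inv_word) simp
  finally show ?thesis .
qed

lemma set_reduce: "set (reduce w) \<subseteq> set w"
  unfolding reduce_def using set_foldr[of w "[]"] by simp

lemma carrier_free_group: "carrier (free_group A) = {w. reduced w \<and> snd ` set w \<subseteq> A}"
  by (simp add: free_group_def)

lemma mult_free_group: "x \<otimes>\<^bsub>free_group A\<^esub> y = reduce (x @ y)"
  by (simp add: free_group_def)

lemma one_free_group: "\<one>\<^bsub>free_group A\<^esub> = []"
  by (simp add: free_group_def)

lemma group_free_group: "group (free_group A)"
proof (rule groupI)
  fix x y assume "x \<in> carrier (free_group A)" "y \<in> carrier (free_group A)"
  then show "x \<otimes>\<^bsub>free_group A\<^esub> y \<in> carrier (free_group A)"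
    using set_reduce[of "x @ y"]
    by (auto simp: carrier_free_group mult_free_group reduced_reduce) force
next
  show "\<one>\<^bsub>free_group A\<^esub> \<in> carrier (free_group A)"
    by (simp add: carrier_free_group one_free_group)
next
  fix x y z
  show "x \<otimes>\<^bsub>free_group A\<^esub> y \<otimes>\<^bsub>free_group A\<^esub> z = x \<otimes>\<^bsub>free_group A\<^esub> (y \<otimes>\<^bsub>free_group A\<^esub> z)"
    by (simp add: mult_free_group reduce_reduce_left reduce_reduce_right)
next
  fix x assume "x \<in> carrier (free_group A)"
  then show "\<one>\<^bsub>free_group A\<^esub> \<otimes>\<^bsub>free_group A\<^esub> x = x"
    by (simp add: carrier_free_group mult_free_group one_free_group reduce_reduced)
next
  fix x assume x: "x \<in> carrier (free_group A)"
  show "\<exists>y\<in>carrier (free_group A). y \<otimes>\<^bsub>free_group A\<^esub> x = \<one>\<^bsub>free_group A\<^esub>"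
  proof (intro bexI)
    show "reduce (inv_word x) \<otimes>\<^bsub>free_group A\<^esub> x = \<one>\<^bsub>free_group A\<^esub>"
      using x by (simp add: carrier_free_group mult_free_group one_free_group reduce_reduce_left reduce_inv_left)
    show "reduce (inv_word x) \<in> carrier (free_group A)"
      using x set_reduce[of "inv_word x"]
      by (auto simp: carrier_free_group reduced_reduce inv_word_def inv_letter_def) force
  qed
qed

section \<open>Evaluating words in a group\<close>

definition eval_letter :: "('a, 'b) monoid_scheme \<Rightarrow> ('g \<Rightarrow> 'a) \<Rightarrow> bool \<times> 'g \<Rightarrow> 'a" where
  "eval_letter G f a = (if fst a then f (snd a) else inv\<^bsub>G\<^esub> (f (snd a)))"

lemma word_eval_Nil [simp]: "word_eval G f [] = \<one>\<^bsub>G\<^esub>"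
  by (simp add: word_eval_def)

lemma word_eval_Cons: "word_eval G f (a # w) = eval_letter G f a \<otimes>\<^bsub>G\<^esub> word_eval G f w"
  by (cases a) (simp add: word_eval_def eval_letter_def)

lemma eval_letter_closed: "group G \<Longrightarrow> f (snd a) \<in> carrier G \<Longrightarrow> eval_letter G f a \<in> carrier G"
  by (simp add: eval_letter_def)

lemma word_eval_closed:
  "group G \<Longrightarrow> (\<forall>x \<in> snd ` set w. f x \<in> carrier G) \<Longrightarrow> word_eval G f w \<in> carrier G"
  by (induction w) (auto simp: word_eval_Cons eval_letter_closed group.is_monoid monoid.m_closed)

lemma word_eval_append:
  assumes "group G" "\<forall>x \<in> snd ` set (x @ y). f x \<in> carrier G"
  shows "word_eval G f (x @ y) = word_eval G f x \<otimes>\<^bsub>G\<^esub> word_eval G f y"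
  using assms
proof (induction x)
  case Nil then show ?case by (simp add: word_eval_closed group.is_monoid)
next
  case (Cons a x)
  then show ?case
    by (simp add: word_eval_Cons group.is_monoid monoid.m_assoc eval_letter_closed word_eval_closed)
qed

lemma word_eval_push:
  assumes G: "group G" and c: "\<forall>x \<in> snd ` set (a # w). f x \<in> carrier G"
  shows "word_eval G f (push a w) = word_eval G f (a # w)"
proof (cases w)
  case Nil then show ?thesis by simp
next
  case (Cons b bs)
  show ?thesis
  proof (cases "snd a = snd b \<and> fst a \<noteq> fst b")
    case True
    have fa: "f (snd a) \<in> carrier G" using c by auto
    have bs: "word_eval G f bs \<in> carrier G" using c Cons by (intro word_eval_closed[OF G]) auto
    have "eval_letter G f a \<otimes>\<^bsub>G\<^esub> eval_letter G f b = \<one>\<^bsub>G\<^esub>"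
      using True fa G by (cases "fst a") (auto simp: eval_letter_def group.l_inv group.r_inv)
    then have "word_eval G f (a # w) = word_eval G f bs"
      using Cons G fa bs
      by (simp add: word_eval_Cons eval_letter_closed True group.is_monoid monoid.m_assoc[symmetric])
    then show ?thesis using Cons True by simp
  next
    case False then show ?thesis using Cons by auto
  qed
qed

lemma word_eval_foldr:
  assumes G: "group G"
  shows "\<forall>x \<in> snd ` set (r @ w). f x \<in> carrier G \<Longrightarrow> word_eval G f (foldr push r w) = word_eval G f (r @ w)"
proof (induction r)
  case Nil then show ?case by simp
next
  case (Cons a r)
  have "word_eval G f (foldr push (a # r) w) = word_eval G f (push a (foldr push r w))" by simp
  also have "\<dots> = word_eval G f (a # foldr push r w)"
    using Cons.prems set_foldr[of r w] by (intro word_eval_push[OF G]) auto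
  also have "\<dots> = word_eval G f (a # r @ w)"
    using Cons by (simp add: word_eval_Cons)
  finally show ?case by simp
qed

lemma word_eval_reduce:
  assumes G: "group G" and "\<forall>x \<in> snd ` set w. f x \<in> carrier G"
  shows "word_eval G f (reduce w) = word_eval G f w"
  using word_eval_foldr[OF G, of w "[]" f] assms by (simp add: reduce_def)

lemma word_eval_hom:
  assumes G: "group G" and f: "\<forall>x \<in> A. f x \<in> carrier G"
  shows "word_eval G f \<in> hom (free_group A) G"
proof (rule homI)
  fix x assume "x \<in> carrier (free_group A)"
  then show "word_eval G f x \<in> carrier G"
    using f by (intro word_eval_closed[OF G]) (auto simp: carrier_free_group)
next
  fix x y assume "x \<in> carrier (free_group A)" "y \<in> carrier (free_group A)"
  then have c: "\<forall>z \<in> snd ` set (x @ y). f z \<in> carrier G" using f by (auto simp: carrier_free_group)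
  show "word_eval G f (x \<otimes>\<^bsub>free_group A\<^esub> y) = word_eval G f x \<otimes>\<^bsub>G\<^esub> word_eval G f y"
    using c by (simp add: mult_free_group word_eval_reduce[OF G] word_eval_append[OF G])
qed

lemma word_eval_letter: "group G \<Longrightarrow> f x \<in> carrier G \<Longrightarrow> word_eval G f [(True, x)] = f x"
  by (simp add: word_eval_Cons eval_letter_def group.is_monoid)

lemma word_eval_cong: "(\<And>x. x \<in> snd ` set w \<Longrightarrow> f x = g x) \<Longrightarrow> word_eval G f w = word_eval G g w"
  by (induction w) (auto simp: word_eval_Cons eval_letter_def)

lemma hom_word_eval:
  assumes G: "group G" and K: "group K" and h: "h \<in> hom G K"
    and f: "\<forall>x \<in> snd ` set w. f x \<in> carrier G"
  shows "h (word_eval G f w) = word_eval K (h \<circ> f) w"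
  using f
proof (induction w)
  case Nil then show ?case using G K h by (simp add: group_hom.hom_one group_hom_def group_hom_axioms_def)
next
  case (Cons a w)
  interpret gh: group_hom G K h using G K h by (simp add: group_hom_def group_hom_axioms_def)
  have fa: "f (snd a) \<in> carrier G" using Cons by auto
  have "h (eval_letter G f a) = eval_letter K (\<lambda>a. h (f a)) a" using fa by (simp add: eval_letter_def)
  then show ?case using Cons fa
    by (simp add: word_eval_Cons eval_letter_closed[OF G] word_eval_closed[OF G])
qed

lemma inv_letter_free: "x \<in> A \<Longrightarrow> inv\<^bsub>free_group A\<^esub> [(True, x)] = [(False, x)]"
proof -
  assume x: "x \<in> A"
  interpret group "free_group A" by (rule group_free_group)
  show ?thesis
    by (rule inv_equality) (use x in \<open>auto simp: carrier_free_group mult_free_group one_free_group reduce_def\<close>)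
qed

lemma word_eval_id: "w \<in> carrier (free_group A) \<Longrightarrow> word_eval (free_group A) (\<lambda>x. [(True, x)]) w = w"
proof (induction w)
  case Nil then show ?case by (simp add: one_free_group)
next
  case (Cons a w)
  then have w: "w \<in> carrier (free_group A)" and ra: "reduced (a # w)" and aA: "snd a \<in> A"
    by (auto simp: carrier_free_group reduced_Cons)
  have "eval_letter (free_group A) (\<lambda>x. [(True, x)]) a = [a]"
    using aA by (cases a) (auto simp: eval_letter_def inv_letter_free)
  then have "word_eval (free_group A) (\<lambda>x. [(True, x)]) (a # w) = reduce ([a] @ w)"
    using Cons.IH w by (simp add: word_eval_Cons mult_free_group)
  also have "\<dots> = a # w" using ra by (simp add: reduce_reduced)
  finally show ?case .
qed

lemma free_group_hom_eq_word_eval: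
  assumes K: "group K" and h: "h \<in> hom (free_group A) K" and w: "w \<in> carrier (free_group A)"
  shows "h w = word_eval K (\<lambda>x. h [(True, x)]) w"
proof -
  have "h w = h (word_eval (free_group A) (\<lambda>x. [(True, x)]) w)" using w by (simp add: word_eval_id)
  also have "\<dots> = word_eval K (h \<circ> (\<lambda>x. [(True, x)])) w"
    using w by (intro hom_word_eval[OF group_free_group K h]) (auto simp: carrier_free_group)
  finally show ?thesis by (simp add: comp_def)
qed

lemma word_eval_map: "word_eval G f (map (\<lambda>(b, c). (b, g c)) w) = word_eval G (f \<circ> g) w"
  by (induction w) (auto simp: word_eval_Cons eval_letter_def)


lemma normal_common_kernel:
  assumes G: "group G" and K: "group K" and homs: "\<And>h. P h \<Longrightarrow> h \<in> hom G K"
  shows "{w \<in> carrier G. \<forall>h. P h \<longrightarrow> h w = \<one>\<^bsub>K\<^esub>} \<lhd> G"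
proof -
  interpret G: group G by (rule G)
  have gh: "\<And>h. P h \<Longrightarrow> group_hom G K h"
    using homs G K by (simp add: group_hom_def group_hom_axioms_def)
  let ?N = "{w \<in> carrier G. \<forall>h. P h \<longrightarrow> h w = \<one>\<^bsub>K\<^esub>}"
  have sub: "subgroup ?N G"
  proof (rule G.subgroupI)
    show "?N \<subseteq> carrier G" by auto
    have "h \<one>\<^bsub>G\<^esub> = \<one>\<^bsub>K\<^esub>" if "P h" for h
      using gh[OF that] by (rule group_hom.hom_one)
    then show "?N \<noteq> {}" by blast
  next
    fix a assume a: "a \<in> ?N"
    have "h (inv\<^bsub>G\<^esub> a) = \<one>\<^bsub>K\<^esub>" if "P h" for h
    proof -
      interpret group_hom G K h by (rule gh[OF that])
      have "h a = \<one>\<^bsub>K\<^esub>" using a that by blast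
      then show ?thesis using a by simp
    qed
    then show "inv\<^bsub>G\<^esub> a \<in> ?N" using a by auto
  next
    fix a b assume a: "a \<in> ?N" and b: "b \<in> ?N"
    have "h (a \<otimes>\<^bsub>G\<^esub> b) = \<one>\<^bsub>K\<^esub>" if "P h" for h
    proof -
      interpret group_hom G K h by (rule gh[OF that])
      have "h a = \<one>\<^bsub>K\<^esub>" "h b = \<one>\<^bsub>K\<^esub>" using a b that by blast+
      then show ?thesis using a b by simp
    qed
    then show "a \<otimes>\<^bsub>G\<^esub> b \<in> ?N" using a b by auto
  qed
  show ?thesis
    unfolding G.normal_inv_iff
  proof (intro conjI sub ballI)
    fix x a assume x: "x \<in> carrier G" and a: "a \<in> ?N"
    show "x \<otimes>\<^bsub>G\<^esub> a \<otimes>\<^bsub>G\<^esub> inv\<^bsub>G\<^esub> x \<in> ?N"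
    proof safe
      show "x \<otimes>\<^bsub>G\<^esub> a \<otimes>\<^bsub>G\<^esub> inv\<^bsub>G\<^esub> x \<in> carrier G" using x a by auto
      fix h assume "P h"
      then interpret group_hom G K h by (rule gh)
      have "h a = \<one>\<^bsub>K\<^esub>" using a \<open>P h\<close> by blast
      then show "h (x \<otimes>\<^bsub>G\<^esub> a \<otimes>\<^bsub>G\<^esub> inv\<^bsub>G\<^esub> x) = \<one>\<^bsub>K\<^esub>"
        using x a by simp
    qed
  qed
qed

section \<open>Equations over F and substitutions\<close>

abbreviation variable :: "nat \<Rightarrow> ('c + nat) word" where
  "variable i \<equiv> [(True, Inr i)]"

abbreviation evalF :: "(nat \<Rightarrow> 'c word) \<Rightarrow> ('c + nat) word \<Rightarrow> 'c word" where
  "evalF x \<equiv> eqn_eval Fgrp id x"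

text \<open>The substitution x_i := q i is evaluation in the F-group F[x_0..x_(k-1)].\<close>
abbreviation subst_vars :: "nat \<Rightarrow> (nat \<Rightarrow> ('c + nat) word) \<Rightarrow> ('c + nat) word \<Rightarrow> ('c + nat) word" where
  "subst_vars k q \<equiv> eqn_eval (FX k) const_word q"

abbreviation tuple_append :: "nat \<Rightarrow> (nat \<Rightarrow> 'a) \<Rightarrow> (nat \<Rightarrow> 'a) \<Rightarrow> nat \<Rightarrow> 'a" where
  "tuple_append k xs ys \<equiv> \<lambda>j. if j < k then xs j else ys j"

lemma group_FX: "group (FX n)"
  by (simp add: FX_def group_free_group)

lemma group_Fgrp: "group Fgrp"
  by (simp add: Fgrp_def group_free_group)

lemma carrier_Fgrp: "carrier Fgrp = {w. reduced w}"
  by (simp add: Fgrp_def carrier_free_group)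

lemma carrier_FX_mono: "n \<le> k \<Longrightarrow> carrier (FX n) \<subseteq> carrier (FX k)"
  by (auto simp: FX_def carrier_free_group)

lemma variable_carrier: "i < n \<Longrightarrow> variable i \<in> carrier (FX n)"
  by (simp add: FX_def carrier_free_group)

lemma const_word_carrier: "v \<in> carrier Fgrp \<Longrightarrow> const_word v \<in> carrier (FX n)"
proof -
  assume "v \<in> carrier Fgrp"
  then have "reduced v" by (simp add: carrier_Fgrp)
  then have "reduced (const_word v)"
    unfolding const_word_def by (induction v rule: reduced.induct) auto
  then show ?thesis by (auto simp: FX_def carrier_free_group const_word_def)
qed

lemma const_letter_carrier: "const_word [(b, c)] \<in> carrier (FX n)"
  by (simp add: const_word_def FX_def carrier_free_group)

lemma letter_FX_cases:
  assumes "w \<in> carrier (FX n)" and "x \<in> snd ` set w"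
  obtains c where "x = Inl c" | i where "i < n" and "x = Inr i"
  using assms by (auto simp: FX_def carrier_free_group)

lemma eqn_eval_hom:
  assumes K: "group K" and iota: "\<And>c. iota [(True, c)] \<in> carrier K"
    and val: "\<And>i. i < n \<Longrightarrow> val i \<in> carrier K"
  shows "eqn_eval K iota val \<in> hom (FX n) K"
  unfolding eqn_eval_def[abs_def] FX_def
  by (rule word_eval_hom[OF K]) (use iota val in auto)

lemma eqn_eval_cong:
  assumes w: "w \<in> carrier (FX n)" and "\<And>c. iota [(True, c)] = iota' [(True, c)]"
    and "\<And>i. i < n \<Longrightarrow> val i = val' i"
  shows "eqn_eval K iota val w = eqn_eval K iota' val' w"
  unfolding eqn_eval_def
proof (rule word_eval_cong)
  fix x assume "x \<in> snd ` set w"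
  with w show "case_sum (\<lambda>c. iota [(True, c)]) val x = case_sum (\<lambda>c. iota' [(True, c)]) val' x"
    by (rule letter_FX_cases) (simp_all add: assms)
qed

lemma eqn_eval_variable: "group K \<Longrightarrow> val i \<in> carrier K \<Longrightarrow> eqn_eval K iota val (variable i) = val i"
  by (simp add: eqn_eval_def word_eval_letter)

lemma hom_eqn_eval:
  assumes K: "group K" and L: "group L" and h: "h \<in> hom K L"
    and iota: "\<And>c. iota [(True, c)] \<in> carrier K" and val: "\<And>i. i < n \<Longrightarrow> val i \<in> carrier K"
    and w: "w \<in> carrier (FX n)"
  shows "h (eqn_eval K iota val w) = eqn_eval L (h \<circ> iota) (h \<circ> val) w"
proof -
  have "\<forall>x \<in> snd ` set w. case_sum (\<lambda>c. iota [(True, c)]) val x \<in> carrier K"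
    using w by (auto elim: letter_FX_cases simp: iota val)
  then have "h (eqn_eval K iota val w) = word_eval L (h \<circ> case_sum (\<lambda>c. iota [(True, c)]) val) w"
    unfolding eqn_eval_def by (rule hom_word_eval[OF K L h])
  also have "\<dots> = eqn_eval L (h \<circ> iota) (h \<circ> val) w"
    unfolding eqn_eval_def by (rule word_eval_cong) (simp split: sum.split)
  finally show ?thesis .
qed

lemma hom_FX_eq_eqn_eval:
  assumes K: "group K" and h: "h \<in> hom (FX n) K" and w: "w \<in> carrier (FX n)"
  shows "h w = eqn_eval K (h \<circ> const_word) (\<lambda>i. h (variable i)) w"
proof -
  have "h w = word_eval K (\<lambda>x. h [(True, x)]) w"
    using free_group_hom_eq_word_eval[OF K] h w unfolding FX_def by blast
  also have "\<dots> = eqn_eval K (h \<circ> const_word) (\<lambda>i. h (variable i)) w"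
    unfolding eqn_eval_def by (rule word_eval_cong) (simp add: const_word_def split: sum.split)
  finally show ?thesis .
qed

lemma eqn_eval_const_word:
  assumes K: "group K" and iota: "iota \<in> hom Fgrp K" and v: "v \<in> carrier Fgrp"
  shows "eqn_eval K iota val (const_word v) = iota v"
proof -
  have "eqn_eval K iota val (const_word v) = word_eval K (\<lambda>c. iota [(True, c)]) v"
    by (simp add: eqn_eval_def const_word_def word_eval_map comp_def)
  also have "\<dots> = iota v"
    using free_group_hom_eq_word_eval[OF K] iota v unfolding Fgrp_def by metis
  finally show ?thesis .
qed

lemma evalF_hom: "(\<And>i. i < n \<Longrightarrow> x i \<in> carrier Fgrp) \<Longrightarrow> evalF x \<in> hom (FX n) Fgrp"
  by (rule eqn_eval_hom[OF group_Fgrp]) (simp_all add: carrier_Fgrp)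

lemma evalF_closed:
  "(\<And>i. i < n \<Longrightarrow> x i \<in> carrier Fgrp) \<Longrightarrow> w \<in> carrier (FX n) \<Longrightarrow> evalF x w \<in> carrier Fgrp"
  by (rule hom_in_carrier[OF evalF_hom])

lemma evalF_const_word: "v \<in> carrier Fgrp \<Longrightarrow> evalF x (const_word v) = v"
  using eqn_eval_const_word[OF group_Fgrp, of id v x] by (simp add: hom_def)

lemma subst_vars_closed:
  "(\<And>i. i < n \<Longrightarrow> q i \<in> carrier (FX k)) \<Longrightarrow> w \<in> carrier (FX n) \<Longrightarrow> subst_vars k q w \<in> carrier (FX k)"
  by (rule hom_in_carrier[OF eqn_eval_hom[OF group_FX]]) (simp_all add: const_letter_carrier)

lemma evalF_subst_vars:
  assumes x: "\<And>i. i < k \<Longrightarrow> x i \<in> carrier Fgrp" and q: "\<And>i. i < n \<Longrightarrow> q i \<in> carrier (FX k)"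
    and w: "w \<in> carrier (FX n)"
  shows "evalF x (subst_vars k q w) = evalF (\<lambda>i. evalF x (q i)) w"
proof -
  have "evalF x \<in> hom (FX k) Fgrp" using x by (rule evalF_hom)
  then have "evalF x (subst_vars k q w) = eqn_eval Fgrp (evalF x \<circ> const_word) (evalF x \<circ> q) w"
    by (rule hom_eqn_eval[OF group_FX group_Fgrp _ _ _ w]) (simp_all add: const_letter_carrier q)
  also have "\<dots> = evalF (\<lambda>i. evalF x (q i)) w"
    by (rule eqn_eval_cong[OF w]) (simp_all add: evalF_const_word carrier_Fgrp)
  finally show ?thesis .
qed

lemma evalF_variable_eq_iff:
  assumes x: "\<And>j. j < n \<Longrightarrow> x j \<in> carrier Fgrp" and i: "i < n" and w: "w \<in> carrier (FX n)"
  shows "evalF x (inv\<^bsub>FX n\<^esub> (variable i) \<otimes>\<^bsub>FX n\<^esub> w) = \<one>\<^bsub>Fgrp\<^esub> \<longleftrightarrow> evalF x w = x i"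
proof -
  have "evalF x \<in> hom (FX n) Fgrp" using x by (rule evalF_hom)
  then interpret group_hom "FX n" Fgrp "evalF x"
    by (simp add: group_hom_def group_hom_axioms_def group_FX group_Fgrp)
  have "evalF x (inv\<^bsub>FX n\<^esub> (variable i) \<otimes>\<^bsub>FX n\<^esub> w) = inv\<^bsub>Fgrp\<^esub> (x i) \<otimes>\<^bsub>Fgrp\<^esub> evalF x w"
    by (simp add: variable_carrier i w x eqn_eval_variable group_Fgrp)
  then show ?thesis
    using H.inv_solve_left'[of "\<one>\<^bsub>Fgrp\<^esub>" "x i" "evalF x w"] x[OF i] w by auto
qed

section \<open>Radicals and coordinate groups\<close>

definition solution :: "nat \<Rightarrow> ('c + nat) word set \<Rightarrow> (nat \<Rightarrow> 'c word) \<Rightarrow> bool" where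
  "solution n U x \<longleftrightarrow> (\<forall>i<n. x i \<in> carrier Fgrp) \<and> (\<forall>u\<in>U. evalF x u = \<one>\<^bsub>Fgrp\<^esub>)"

abbreviation proj_coord :: "nat \<Rightarrow> ('c + nat) word set \<Rightarrow> ('c + nat) word \<Rightarrow> ('c + nat) word set" where
  "proj_coord n U w \<equiv> Rad n U #>\<^bsub>FX n\<^esub> w"

lemma solution_carrier: "solution n U x \<Longrightarrow> i < n \<Longrightarrow> x i \<in> carrier Fgrp"
  by (simp add: solution_def)

lemma F_hom_evalF: "(\<And>i. i < n \<Longrightarrow> x i \<in> carrier Fgrp) \<Longrightarrow> F_hom n (evalF x)"
  by (simp add: F_hom_def evalF_hom evalF_const_word)

lemma F_hom_eq_evalF:
  assumes h: "F_hom n h" and w: "w \<in> carrier (FX n)"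
  shows "h w = evalF (\<lambda>i. h (variable i)) w"
proof -
  have "h \<in> hom (FX n) Fgrp" using h by (simp add: F_hom_def)
  then have "h w = eqn_eval Fgrp (h \<circ> const_word) (\<lambda>i. h (variable i)) w"
    using w by (rule hom_FX_eq_eqn_eval[OF group_Fgrp])
  also have "\<dots> = evalF (\<lambda>i. h (variable i)) w"
    using h by (intro eqn_eval_cong[OF w]) (simp_all add: F_hom_def carrier_Fgrp)
  finally show ?thesis .
qed

lemma Rad_iff:
  assumes U: "U \<subseteq> carrier (FX n)"
  shows "w \<in> Rad n U \<longleftrightarrow> w \<in> carrier (FX n) \<and> (\<forall>x. solution n U x \<longrightarrow> evalF x w = \<one>\<^bsub>Fgrp\<^esub>)"
proof safe
  fix x assume "w \<in> Rad n U" and "solution n U x"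
  then show "evalF x w = \<one>\<^bsub>Fgrp\<^esub>"
    using F_hom_evalF[of n x] by (auto simp: Rad_def solution_def)
next
  assume w: "w \<in> carrier (FX n)" and vanish: "\<forall>x. solution n U x \<longrightarrow> evalF x w = \<one>\<^bsub>Fgrp\<^esub>"
  show "w \<in> Rad n U"
    unfolding Rad_def
  proof (intro CollectI conjI w allI impI, elim conjE)
    fix h assume h: "F_hom n h" and kills: "\<forall>u\<in>U. h u = \<one>\<^bsub>Fgrp\<^esub>"
    have "h (variable i) \<in> carrier Fgrp" if "i < n" for i
      using h hom_in_carrier variable_carrier[OF that] by (auto simp: F_hom_def)
    moreover have "evalF (\<lambda>i. h (variable i)) u = \<one>\<^bsub>Fgrp\<^esub>" if "u \<in> U" for u
      using kills that F_hom_eq_evalF[OF h subsetD[OF U that]] by simp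
    ultimately have "solution n U (\<lambda>i. h (variable i))" by (simp add: solution_def)
    then show "h w = \<one>\<^bsub>Fgrp\<^esub>" using vanish F_hom_eq_evalF[OF h w] by simp
  qed
qed (simp add: Rad_def)

lemma system_subset_Rad: "U \<subseteq> carrier (FX n) \<Longrightarrow> U \<subseteq> Rad n U"
  by (auto simp: Rad_iff solution_def)

lemma Rad_normal: "Rad n U \<lhd> FX n"
  unfolding Rad_def by (rule normal_common_kernel[OF group_FX group_Fgrp]) (simp add: F_hom_def)

lemma group_coord: "group (coord n U)"
  unfolding coord_def by (rule normal.factorgroup_is_group[OF Rad_normal])

lemma proj_coord_hom: "proj_coord n U \<in> hom (FX n) (coord n U)"
  unfolding coord_def by (rule normal.r_coset_hom_Mod[OF Rad_normal])

lemma proj_coord_closed: "w \<in> carrier (FX n) \<Longrightarrow> proj_coord n U w \<in> carrier (coord n U)"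
  by (rule hom_in_carrier[OF proj_coord_hom])

lemma coord_elemE:
  assumes "g \<in> carrier (coord n U)"
  obtains w where "w \<in> carrier (FX n)" and "g = proj_coord n U w"
  using assms by (auto simp: coord_def FactGroup_def RCOSETS_def)

lemma proj_coord_eq_one_iff:
  assumes w: "w \<in> carrier (FX n)"
  shows "proj_coord n U w = \<one>\<^bsub>coord n U\<^esub> \<longleftrightarrow> w \<in> Rad n U"
proof -
  have R: "subgroup (Rad n U) (FX n)" by (rule normal_imp_subgroup[OF Rad_normal])
  have "proj_coord n U w = Rad n U \<longleftrightarrow> w \<in> Rad n U"
    using group.rcos_self[OF group_FX w R] subgroup.rcos_const[OF R group_FX] by auto
  then show ?thesis by (simp add: coord_def)
qed

lemma proj_coord_eq_eqn_eval:
  assumes w: "w \<in> carrier (FX n)"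
  shows "proj_coord n U w = eqn_eval (coord n U) (canF n U) (mu n U) w"
proof -
  have "proj_coord n U \<circ> const_word = canF n U" and "(\<lambda>i. proj_coord n U (variable i)) = mu n U"
    by (simp_all add: fun_eq_iff canF_def mu_def)
  then show ?thesis
    using hom_FX_eq_eqn_eval[OF group_coord proj_coord_hom w] by simp
qed

lemma proj_coord_subst_vars:
  assumes q: "\<And>i. i < n \<Longrightarrow> q i \<in> carrier (FX k)" and w: "w \<in> carrier (FX n)"
  shows "proj_coord k U (subst_vars k q w) = eqn_eval (coord k U) (canF k U) (\<lambda>i. proj_coord k U (q i)) w"
proof -
  have "proj_coord k U \<circ> const_word = canF k U" and "proj_coord k U \<circ> q = (\<lambda>i. proj_coord k U (q i))"
    by (simp_all add: fun_eq_iff canF_def)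
  moreover have "proj_coord k U (subst_vars k q w)
      = eqn_eval (coord k U) (proj_coord k U \<circ> const_word) (proj_coord k U \<circ> q) w"
    by (rule hom_eqn_eval[OF group_FX group_coord proj_coord_hom _ _ w]) (simp_all add: const_letter_carrier q)
  ultimately show ?thesis by simp
qed

lemma evalF_eq_if_proj_coord_eq:
  assumes U: "U \<subseteq> carrier (FX n)" and w: "w \<in> carrier (FX n)" and w': "w' \<in> carrier (FX n)"
    and eq: "proj_coord n U w = proj_coord n U w'" and x: "solution n U x"
  shows "evalF x w = evalF x w'"
proof -
  have R: "subgroup (Rad n U) (FX n)" by (rule normal_imp_subgroup[OF Rad_normal])
  have "w \<in> proj_coord n U w'" using group.rcos_self[OF group_FX w R] eq by simp
  then obtain r where r: "r \<in> Rad n U" and w_eq: "w = r \<otimes>\<^bsub>FX n\<^esub> w'"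
    unfolding r_coset_def by blast
  interpret group_hom "FX n" Fgrp "evalF x"
    using evalF_hom[of n x] solution_carrier[OF x]
    by (simp add: group_hom_def group_hom_axioms_def group_FX group_Fgrp)
  have "evalF x r = \<one>\<^bsub>Fgrp\<^esub>" and "r \<in> carrier (FX n)" using r x by (simp_all add: Rad_iff[OF U])
  then show ?thesis using w_eq w' by simp
qed

lemma admits_lift_iff:
  assumes T: "T \<in> carrier (FX (n + m))"
  shows "admits_lift n U m T \<longleftrightarrow>
    (\<exists>y. (\<forall>i. n \<le> i \<and> i < n + m \<longrightarrow> y i \<in> carrier (FX n))
         \<and> subst_vars n (tuple_append n variable y) T \<in> Rad n U)"
proof -
  have lifted_value:
    "eqn_eval (coord n U) (canF n U) (tuple_append n (mu n U) (\<lambda>i. proj_coord n U (y i))) T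
       = \<one>\<^bsub>coord n U\<^esub> \<longleftrightarrow> subst_vars n (tuple_append n variable y) T \<in> Rad n U"
    if y: "\<forall>i. n \<le> i \<and> i < n + m \<longrightarrow> y i \<in> carrier (FX n)" for y
  proof -
    have q: "tuple_append n variable y i \<in> carrier (FX n)" if "i < n + m" for i
      using y that by (auto simp: variable_carrier)
    have "eqn_eval (coord n U) (canF n U) (tuple_append n (mu n U) (\<lambda>i. proj_coord n U (y i))) T
        = eqn_eval (coord n U) (canF n U) (\<lambda>i. proj_coord n U (tuple_append n variable y i)) T"
      by (rule eqn_eval_cong[OF T]) (simp_all add: mu_def)
    also have "\<dots> = proj_coord n U (subst_vars n (tuple_append n variable y) T)"
      by (rule proj_coord_subst_vars[symmetric, OF q T])
    moreover have "subst_vars n (tuple_append n variable y) T \<in> carrier (FX n)"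
      by (rule subst_vars_closed[OF _ T]) (rule q)
    ultimately show ?thesis
      using proj_coord_eq_one_iff by simp
  qed
  show ?thesis
  proof
    assume "admits_lift n U m T"
    then obtain Y where Y: "\<forall>i. n \<le> i \<and> i < n + m \<longrightarrow> Y i \<in> carrier (coord n U)"
      and lift: "eqn_eval (coord n U) (canF n U) (tuple_append n (mu n U) Y) T = \<one>\<^bsub>coord n U\<^esub>"
      unfolding admits_lift_def by blast
    have "\<forall>i\<in>{n..<n + m}. \<exists>w. w \<in> carrier (FX n) \<and> Y i = proj_coord n U w"
      using Y by (metis atLeastLessThan_iff coord_elemE)
    then obtain y where y: "\<forall>i\<in>{n..<n + m}. y i \<in> carrier (FX n) \<and> Y i = proj_coord n U (y i)"
      by (auto dest!: bchoice)
    then have y_carrier: "\<forall>i. n \<le> i \<and> i < n + m \<longrightarrow> y i \<in> carrier (FX n)" by simp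
    have "eqn_eval (coord n U) (canF n U) (tuple_append n (mu n U) (\<lambda>i. proj_coord n U (y i))) T
        = \<one>\<^bsub>coord n U\<^esub>"
      using lift y by (subst eqn_eval_cong[OF T]) auto
    then show "\<exists>y. (\<forall>i. n \<le> i \<and> i < n + m \<longrightarrow> y i \<in> carrier (FX n))
        \<and> subst_vars n (tuple_append n variable y) T \<in> Rad n U"
      using lifted_value[OF y_carrier] y_carrier by blast
  next
    assume "\<exists>y. (\<forall>i. n \<le> i \<and> i < n + m \<longrightarrow> y i \<in> carrier (FX n))
        \<and> subst_vars n (tuple_append n variable y) T \<in> Rad n U"
    then obtain y where y: "\<forall>i. n \<le> i \<and> i < n + m \<longrightarrow> y i \<in> carrier (FX n)"
      and Rad: "subst_vars n (tuple_append n variable y) T \<in> Rad n U" by blast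
    show "admits_lift n U m T"
      unfolding admits_lift_def
      using y Rad lifted_value[OF y]
      by (intro exI[of _ "\<lambda>i. proj_coord n U (y i)"] conjI) (auto intro: proj_coord_closed)
  qed
qed

lemma coord_endo_subst_vars:
  assumes \<phi>: "\<phi> \<in> hom (coord n U) (coord n U)"
    and \<phi>_F: "\<And>v. v \<in> carrier Fgrp \<Longrightarrow> \<phi> (canF n U v) = canF n U v"
  obtains p where "\<And>i. i < n \<Longrightarrow> p i \<in> carrier (FX n)"
    and "\<And>w. w \<in> carrier (FX n) \<Longrightarrow> \<phi> (proj_coord n U w) = proj_coord n U (subst_vars n p w)"
proof -
  have mu_closed: "mu n U i \<in> carrier (coord n U)" if "i < n" for i
    using proj_coord_closed[OF variable_carrier[OF that]] by (simp add: mu_def)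
  have canF_closed: "canF n U [(True, c)] \<in> carrier (coord n U)" for c
    unfolding canF_def by (rule proj_coord_closed[OF const_letter_carrier])
  have "\<forall>i\<in>{..<n}. \<exists>w. w \<in> carrier (FX n) \<and> \<phi> (mu n U i) = proj_coord n U w"
    using hom_in_carrier[OF \<phi> mu_closed] by (metis lessThan_iff coord_elemE)
  then obtain p where p: "\<forall>i\<in>{..<n}. p i \<in> carrier (FX n) \<and> \<phi> (mu n U i) = proj_coord n U (p i)"
    by (auto dest!: bchoice)
  have "\<phi> (proj_coord n U w) = proj_coord n U (subst_vars n p w)" if w: "w \<in> carrier (FX n)" for w
  proof -
    have "\<phi> (proj_coord n U w) = \<phi> (eqn_eval (coord n U) (canF n U) (mu n U) w)"
      by (simp add: proj_coord_eq_eqn_eval[OF w])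
    also have "\<dots> = eqn_eval (coord n U) (\<phi> \<circ> canF n U) (\<phi> \<circ> mu n U) w"
      by (rule hom_eqn_eval[OF group_coord group_coord \<phi> _ _ w]) (simp_all add: canF_closed mu_closed)
    also have "\<dots> = eqn_eval (coord n U) (canF n U) (\<lambda>i. proj_coord n U (p i)) w"
      by (rule eqn_eval_cong[OF w]) (use p \<phi>_F in \<open>auto simp: carrier_Fgrp\<close>)
    also have "\<dots> = proj_coord n U (subst_vars n p w)"
      using p by (simp add: proj_coord_subst_vars[OF _ w])
    finally show ?thesis .
  qed
  then show thesis using p that by blast
qed

lemma coord_iso_if_surj_hom:
  assumes K: "group K" and h: "h \<in> hom (FX n) K" and surj: "h ` carrier (FX n) = carrier K"
    and ker: "\<And>w. w \<in> carrier (FX n) \<Longrightarrow> h w = \<one>\<^bsub>K\<^esub> \<longleftrightarrow> w \<in> Rad n U"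
  obtains \<psi> where "\<psi> \<in> iso (coord n U) K"
    and "\<And>w. w \<in> carrier (FX n) \<Longrightarrow> \<psi> (proj_coord n U w) = h w"
proof -
  interpret group_hom "FX n" K h
    using h K by (simp add: group_hom_def group_hom_axioms_def group_FX)
  have "Rad n U \<subseteq> carrier (FX n)" by (auto simp: Rad_def)
  then have kernel: "kernel (FX n) K h = Rad n U"
    using ker unfolding kernel_def by blast
  have "(\<lambda>C. the_elem (h ` C)) \<in> iso (coord n U) K"
    using FactGroup_iso_set[OF surj] by (simp add: coord_def kernel)
  moreover have "the_elem (h ` proj_coord n U w) = h w" if w: "w \<in> carrier (FX n)" for w
  proof -
    have "h ` proj_coord n U w = {h w}"
      using w unfolding kernel[symmetric] by (auto simp: kernel_def r_coset_def intro!: imageI)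
    then show ?thesis by simp
  qed
  ultimately show thesis by (rule that)
qed

lemma evalF_subst_vars_append_variable:
  assumes x: "\<And>i. i < n \<Longrightarrow> x i \<in> carrier Fgrp"
    and y: "\<And>i. n \<le> i \<Longrightarrow> i < n + m \<Longrightarrow> y i \<in> carrier (FX n)"
    and w: "w \<in> carrier (FX (n + m))"
  shows "evalF x (subst_vars n (tuple_append n variable y) w)
    = evalF (tuple_append n x (\<lambda>i. evalF x (y i))) w"
proof -
  have "evalF x (subst_vars n (tuple_append n variable y) w)
      = evalF (\<lambda>i. evalF x (tuple_append n variable y i)) w"
    by (rule evalF_subst_vars[OF _ _ w]) (auto simp: x y variable_carrier)
  also have "\<dots> = evalF (tuple_append n x (\<lambda>i. evalF x (y i))) w"
    by (rule eqn_eval_cong[OF w]) (simp_all add: eqn_eval_variable group_Fgrp x)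
  finally show ?thesis .
qed

lemma evalF_subst_vars_append_map:
  assumes x: "\<And>i. i < n \<Longrightarrow> x i \<in> carrier Fgrp"
    and z: "\<And>i. n \<le> i \<Longrightarrow> i < n + m \<Longrightarrow> z i \<in> carrier Fgrp"
    and p: "\<And>i. i < n \<Longrightarrow> p i \<in> carrier (FX n)" and w: "w \<in> carrier (FX (n + m))"
  shows "evalF (tuple_append n x z) (subst_vars (n + m) (tuple_append n p variable) w)
    = evalF (tuple_append n (\<lambda>i. evalF x (p i)) z) w"
proof -
  have xz: "tuple_append n x z i \<in> carrier Fgrp" if "i < n + m" for i
    using x z that by (cases "i < n") auto
  have q: "tuple_append n p variable i \<in> carrier (FX (n + m))" if "i < n + m" for i
    using p carrier_FX_mono[of n "n + m"] variable_carrier that by (cases "i < n") auto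
  have "evalF (tuple_append n x z) (subst_vars (n + m) (tuple_append n p variable) w)
      = evalF (\<lambda>i. evalF (tuple_append n x z) (tuple_append n p variable i)) w"
    by (rule evalF_subst_vars[OF _ _ w]) (simp_all add: xz q)
  also have "\<dots> = evalF (tuple_append n (\<lambda>i. evalF x (p i)) z) w"
  proof (rule eqn_eval_cong[OF w])
    fix i assume i: "i < n + m"
    show "evalF (tuple_append n x z) (tuple_append n p variable i) = tuple_append n (\<lambda>i. evalF x (p i)) z i"
    proof (cases "i < n")
      case True
      then show ?thesis using eqn_eval_cong[OF p[OF True], of id id "tuple_append n x z" x] by simp
    next
      case False
      then show ?thesis using xz[OF i] by (simp add: eqn_eval_variable group_Fgrp)
    qed
  qed simp
  finally show ?thesis .
qed

section \<open>Retractions of solution sets\<close>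

locale variety_retraction =
  fixes n :: nat and S :: "('c + nat) word set" and p :: "nat \<Rightarrow> ('c + nat) word"
  assumes S_carrier: "S \<subseteq> carrier (FX n)"
    and p_carrier: "\<And>i. i < n \<Longrightarrow> p i \<in> carrier (FX n)"
    and solution_map: "\<And>x. solution n S x \<Longrightarrow> solution n S (\<lambda>i. evalF x (p i))"
    and map_idem: "\<And>x i. solution n S x \<Longrightarrow> i < n \<Longrightarrow> evalF (\<lambda>j. evalF x (p j)) (p i) = evalF x (p i)"
begin

text \<open>The system U = S \<union> {x_i = p_i}, whose solution set is the image p(V(S)).\<close>
definition image_system :: "('c + nat) word set" where
  "image_system = S \<union> (\<lambda>i. inv\<^bsub>FX n\<^esub> (variable i) \<otimes>\<^bsub>FX n\<^esub> p i) ` {..<n}"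

lemma image_system_carrier: "image_system \<subseteq> carrier (FX n)"
proof -
  interpret FX: group "FX n :: ('c + nat) word monoid" by (rule group_FX)
  show ?thesis using S_carrier by (auto simp: image_system_def p_carrier variable_carrier)
qed

lemma finite_system_image_system: "finite S \<Longrightarrow> finite_system n image_system"
  using image_system_carrier by (simp add: finite_system_def image_system_def)

lemma solution_image_system_iff:
  "solution n image_system x \<longleftrightarrow> solution n S x \<and> (\<forall>i<n. evalF x (p i) = x i)"
proof -
  have "evalF x (inv\<^bsub>FX n\<^esub> (variable i) \<otimes>\<^bsub>FX n\<^esub> p i) = \<one>\<^bsub>Fgrp\<^esub> \<longleftrightarrow> evalF x (p i) = x i"
    if "\<forall>j<n. x j \<in> carrier Fgrp" "i < n" for i
    using that by (intro evalF_variable_eq_iff p_carrier) auto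
  then show ?thesis
    unfolding solution_def image_system_def by blast
qed

lemma solution_image_system_map: "solution n S x \<Longrightarrow> solution n image_system (\<lambda>i. evalF x (p i))"
  by (simp add: solution_image_system_iff solution_map map_idem)

lemma Rad_image_system_iff:
  assumes w: "w \<in> carrier (FX n)"
  shows "w \<in> Rad n image_system \<longleftrightarrow> subst_vars n p w \<in> Rad n S"
proof -
  have subst_eval: "evalF x (subst_vars n p w) = evalF (\<lambda>i. evalF x (p i)) w" if "solution n S x" for x
    by (rule evalF_subst_vars[OF _ _ w]) (simp_all add: solution_carrier[OF that] p_carrier)
  have fixed_eval: "evalF (\<lambda>i. evalF x (p i)) w = evalF x w" if "solution n image_system x" for x
    using that by (intro eqn_eval_cong[OF w]) (simp_all add: solution_image_system_iff)
  show ?thesis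
  proof
    assume "w \<in> Rad n image_system"
    then show "subst_vars n p w \<in> Rad n S"
      using subst_vars_closed[OF p_carrier w] subst_eval solution_image_system_map
      by (auto simp: Rad_iff[OF S_carrier] Rad_iff[OF image_system_carrier])
  next
    assume "subst_vars n p w \<in> Rad n S"
    then show "w \<in> Rad n image_system"
      using w subst_eval fixed_eval
      by (auto simp: Rad_iff[OF S_carrier] Rad_iff[OF image_system_carrier] solution_image_system_iff)
  qed
qed

lemma compatible_subst_vars:
  assumes T: "T \<in> carrier (FX (n + m))" and compat: "compatible n image_system m T"
  shows "compatible n S m (subst_vars (n + m) (tuple_append n p variable) T)"
  unfolding compatible_def
proof (intro allI impI)
  fix x assume "(\<forall>i<n. x i \<in> carrier Fgrp) \<and> (\<forall>u\<in>S. evalF x u = \<one>\<^bsub>Fgrp\<^esub>)"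
  then have x: "solution n S x" by (simp add: solution_def)
  then have "solution n image_system (\<lambda>i. evalF x (p i))" by (rule solution_image_system_map)
  then obtain z where z: "\<forall>i. n \<le> i \<and> i < n + m \<longrightarrow> z i \<in> carrier Fgrp"
    and "evalF (tuple_append n (\<lambda>i. evalF x (p i)) z) T = \<one>\<^bsub>Fgrp\<^esub>"
    using compat[unfolded compatible_def, rule_format, of "\<lambda>i. evalF x (p i)"]
    by (auto simp: solution_def)
  moreover have "evalF (tuple_append n x z) (subst_vars (n + m) (tuple_append n p variable) T)
      = evalF (tuple_append n (\<lambda>i. evalF x (p i)) z) T"
    using z by (intro evalF_subst_vars_append_map[OF _ _ p_carrier T]) (simp_all add: solution_carrier[OF x])
  ultimately show "\<exists>z. (\<forall>i. n \<le> i \<and> i < n + m \<longrightarrow> z i \<in> carrier Fgrp)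
      \<and> evalF (tuple_append n x z) (subst_vars (n + m) (tuple_append n p variable) T) = \<one>\<^bsub>Fgrp\<^esub>"
    by auto
qed

text \<open>On V(U) the map p is the identity, so T(X, y) agrees there with T(p(X), y), which
  vanishes on V(S).\<close>
lemma subst_lift_in_Rad_image_system:
  assumes T: "T \<in> carrier (FX (n + m))"
    and y: "\<forall>i. n \<le> i \<and> i < n + m \<longrightarrow> y i \<in> carrier (FX n)"
    and lift: "subst_vars n (tuple_append n variable y)
                 (subst_vars (n + m) (tuple_append n p variable) T) \<in> Rad n S"
  shows "subst_vars n (tuple_append n variable y) T \<in> Rad n image_system"
proof -
  define T' where "T' = subst_vars (n + m) (tuple_append n p variable) T"
  have T': "T' \<in> carrier (FX (n + m))"
    unfolding T'_def using p_carrier carrier_FX_mono[of n "n + m"]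
    by (intro subst_vars_closed[OF _ T]) (auto simp: variable_carrier)
  have "evalF x (subst_vars n (tuple_append n variable y) T) = \<one>\<^bsub>Fgrp\<^esub>"
    if x: "solution n image_system x" for x
  proof -
    have xS: "solution n S x" and fixed: "\<forall>i<n. evalF x (p i) = x i"
      using x by (simp_all add: solution_image_system_iff)
    let ?z = "\<lambda>i. evalF x (y i)"
    have z: "?z i \<in> carrier Fgrp" if "n \<le> i" "i < n + m" for i
      using y that by (intro evalF_closed[of n]) (auto simp: solution_carrier[OF xS])
    have "evalF x (subst_vars n (tuple_append n variable y) T) = evalF (tuple_append n x ?z) T"
      using y by (intro evalF_subst_vars_append_variable[OF _ _ T]) (simp_all add: solution_carrier[OF xS])
    also have "\<dots> = evalF (tuple_append n (\<lambda>i. evalF x (p i)) ?z) T"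
      using fixed by (simp cong: if_cong)
    also have "\<dots> = evalF (tuple_append n x ?z) T'"
      unfolding T'_def using z
      by (intro evalF_subst_vars_append_map[symmetric, OF _ _ p_carrier T]) (simp_all add: solution_carrier[OF xS])
    also have "\<dots> = evalF x (subst_vars n (tuple_append n variable y) T')"
      using y by (intro evalF_subst_vars_append_variable[symmetric, OF _ _ T']) (simp_all add: solution_carrier[OF xS])
    also have "\<dots> = \<one>\<^bsub>Fgrp\<^esub>"
      using lift xS by (simp add: Rad_iff[OF S_carrier] T'_def)
    finally show ?thesis .
  qed
  moreover have "subst_vars n (tuple_append n variable y) T \<in> carrier (FX n)"
    using y by (intro subst_vars_closed[OF _ T]) (auto simp: variable_carrier)
  ultimately show ?thesis
    by (simp add: Rad_iff[OF image_system_carrier])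
qed

lemma lift_property_image_system:
  assumes S_lift: "lift_property n S"
  shows "lift_property n image_system"
  unfolding lift_property_def
proof (intro allI impI, elim conjE)
  fix m T assume T: "T \<in> carrier (FX (n + m))" and compat: "compatible n image_system m T"
  let ?T' = "subst_vars (n + m) (tuple_append n p variable) T"
  have T': "?T' \<in> carrier (FX (n + m))"
    using p_carrier carrier_FX_mono[of n "n + m"]
    by (intro subst_vars_closed[OF _ T]) (auto simp: variable_carrier)
  have "admits_lift n S m ?T'"
    using S_lift T' compatible_subst_vars[OF T compat] by (simp add: lift_property_def)
  then obtain y where y: "\<forall>i. n \<le> i \<and> i < n + m \<longrightarrow> y i \<in> carrier (FX n)"
    and lift: "subst_vars n (tuple_append n variable y) ?T' \<in> Rad n S"
    using admits_lift_iff[OF T'] by blast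
  then show "admits_lift n image_system m T"
    using admits_lift_iff[OF T] subst_lift_in_Rad_image_system[OF T y lift] by blast
qed

lemma image_system_coord_iso:
  assumes H: "subgroup H (coord n S)"
    and \<phi>: "\<phi> \<in> hom (coord n S) ((coord n S)\<lparr>carrier := H\<rparr>)" and \<phi>_id: "\<forall>h \<in> H. \<phi> h = h"
    and \<phi>_subst: "\<And>w. w \<in> carrier (FX n) \<Longrightarrow> \<phi> (proj_coord n S w) = proj_coord n S (subst_vars n p w)"
  obtains \<psi> where "\<psi> \<in> iso (coord n image_system) ((coord n S)\<lparr>carrier := H\<rparr>)"
    and "\<And>w. w \<in> carrier (FX n) \<Longrightarrow> \<psi> (proj_coord n image_system w) = \<phi> (proj_coord n S w)"
proof -
  let ?H = "(coord n S)\<lparr>carrier := H\<rparr>" and ?h = "\<lambda>w. \<phi> (proj_coord n S w)"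
  have h: "?h \<in> hom (FX n) ?H"
    using hom_compose[OF proj_coord_hom \<phi>] by (simp add: comp_def)
  have surj: "?h ` carrier (FX n) = carrier ?H"
    using hom_in_carrier[OF h] subgroup.subset[OF H] \<phi>_id by (fastforce elim: coord_elemE)
  have ker: "?h w = \<one>\<^bsub>?H\<^esub> \<longleftrightarrow> w \<in> Rad n image_system" if w: "w \<in> carrier (FX n)" for w
  proof -
    have "subst_vars n p w \<in> carrier (FX n)" by (rule subst_vars_closed[OF _ w]) (rule p_carrier)
    then show ?thesis using w by (simp add: \<phi>_subst proj_coord_eq_one_iff Rad_image_system_iff)
  qed
  show thesis
    using coord_iso_if_surj_hom[OF subgroup.subgroup_is_group[OF H group_coord] h surj ker] that by blast
qed

end

lemma variety_retraction_if_idempotent_endo: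
  assumes S: "S \<subseteq> carrier (FX n)" and p: "\<And>i. i < n \<Longrightarrow> p i \<in> carrier (FX n)"
    and \<phi>: "\<phi> \<in> hom (coord n S) (coord n S)"
    and idem: "\<And>g. g \<in> carrier (coord n S) \<Longrightarrow> \<phi> (\<phi> g) = \<phi> g"
    and \<phi>_subst: "\<And>w. w \<in> carrier (FX n) \<Longrightarrow> \<phi> (proj_coord n S w) = proj_coord n S (subst_vars n p w)"
  shows "variety_retraction n S p"
proof -
  interpret group_hom "coord n S" "coord n S" \<phi>
    using \<phi> by (simp add: group_hom_def group_hom_axioms_def group_coord)
  have subst_closed: "subst_vars n p w \<in> carrier (FX n)" if "w \<in> carrier (FX n)" for w
    using p that by (rule subst_vars_closed)
  have subst_eval: "evalF x (subst_vars n p w) = evalF (\<lambda>i. evalF x (p i)) w"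
    if "solution n S x" "w \<in> carrier (FX n)" for x w
    using that by (intro evalF_subst_vars p) (simp_all add: solution_carrier)
  have maps: "solution n S (\<lambda>i. evalF x (p i))" if x: "solution n S x" for x
  proof -
    have "evalF (\<lambda>i. evalF x (p i)) u = \<one>\<^bsub>Fgrp\<^esub>" if u: "u \<in> S" for u
    proof -
      have uS: "u \<in> carrier (FX n)" using S u by blast
      have "proj_coord n S u = \<one>\<^bsub>coord n S\<^esub>"
        using u system_subset_Rad[OF S] by (simp add: proj_coord_eq_one_iff[OF uS] subset_iff)
      then have "proj_coord n S (subst_vars n p u) = \<one>\<^bsub>coord n S\<^esub>"
        using \<phi>_subst[OF uS] by simp
      then have "subst_vars n p u \<in> Rad n S"
        by (simp add: proj_coord_eq_one_iff[OF subst_closed[OF uS]])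
      then show ?thesis using x subst_eval[OF x uS] by (simp add: Rad_iff[OF S])
    qed
    moreover have "evalF x (p i) \<in> carrier Fgrp" if "i < n" for i
      using p[OF that] by (rule evalF_closed[rotated]) (rule solution_carrier[OF x])
    ultimately show ?thesis by (simp add: solution_def)
  qed
  have maps_idem: "evalF (\<lambda>j. evalF x (p j)) (p i) = evalF x (p i)"
    if x: "solution n S x" and i: "i < n" for x i
  proof -
    have p_i: "proj_coord n S (p i) = \<phi> (proj_coord n S (variable i))"
      using \<phi>_subst[OF variable_carrier[OF i]]
        eqn_eval_variable[where val = p and iota = const_word, OF group_FX p[OF i]]
      by simp
    have "proj_coord n S (subst_vars n p (p i)) = proj_coord n S (p i)"
      using \<phi>_subst[OF p[OF i]] p_i idem[OF proj_coord_closed[OF variable_carrier[OF i]]] by simp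
    then have "evalF x (subst_vars n p (p i)) = evalF x (p i)"
      using evalF_eq_if_proj_coord_eq[OF S subst_closed[OF p[OF i]] p[OF i] _ x] by blast
    then show ?thesis using subst_eval[OF x p[OF i]] by simp
  qed
  show ?thesis
    using S p maps maps_idem by unfold_locales
qed

theorem mainTheorem14:
  fixes S :: "('c + nat) word set" and n :: nat
    and H :: "('c + nat) word set set"
    and \<phi> :: "('c + nat) word set \<Rightarrow> ('c + nat) word set"
  assumes nonabelian: "\<exists>a b :: 'c. a \<noteq> b"
    and S_fin: "finite_system n S"
    and S_K: "lift_property n S"
    and H_sub: "subgroup H (coord n S)"
    and H_fg: "\<exists>A. finite A \<and> A \<subseteq> carrier (coord n S) \<and> H = generate (coord n S) A"
    and F_le_H: "canF n S ` carrier Fgrp \<subseteq> H"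
    and retr_hom: "\<phi> \<in> hom (coord n S) ((coord n S)\<lparr>carrier := H\<rparr>)"
    and retr_id: "\<forall>h \<in> H. \<phi> h = h"
  shows "\<exists>k U \<psi>. finite_system k U
            \<and> \<psi> \<in> iso (coord k U) ((coord n S)\<lparr>carrier := H\<rparr>)
            \<and> (\<forall>w \<in> carrier Fgrp. \<psi> (canF k U w) = canF n S w)
            \<and> lift_property k U"
proof -
  have S: "S \<subseteq> carrier (FX n)" "finite S" using S_fin by (simp_all add: finite_system_def)
  have \<phi>_H: "\<phi> g \<in> H" if "g \<in> carrier (coord n S)" for g
    using hom_in_carrier[OF retr_hom that] by simp
  have \<phi>_endo: "\<phi> \<in> hom (coord n S) (coord n S)"
    using retr_hom subgroup.subset[OF H_sub] by (auto simp: hom_def)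
  obtain p where p: "\<And>i. i < n \<Longrightarrow> p i \<in> carrier (FX n)"
    and \<phi>_subst: "\<And>w. w \<in> carrier (FX n) \<Longrightarrow> \<phi> (proj_coord n S w) = proj_coord n S (subst_vars n p w)"
    using coord_endo_subst_vars[OF \<phi>_endo] F_le_H retr_id by blast
  interpret variety_retraction n S p
    using variety_retraction_if_idempotent_endo[OF S(1) p \<phi>_endo _ \<phi>_subst] \<phi>_H retr_id by blast
  obtain \<psi> where \<psi>: "\<psi> \<in> iso (coord n image_system) ((coord n S)\<lparr>carrier := H\<rparr>)"
    and \<psi>_proj: "\<And>w. w \<in> carrier (FX n) \<Longrightarrow> \<psi> (proj_coord n image_system w) = \<phi> (proj_coord n S w)"
    using image_system_coord_iso[OF H_sub retr_hom retr_id \<phi>_subst] by blast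
  have "\<psi> (canF n image_system v) = canF n S v" if "v \<in> carrier Fgrp" for v
    using \<psi>_proj[OF const_word_carrier[OF that]] F_le_H retr_id that by (auto simp: canF_def)
  then show ?thesis
    using finite_system_image_system[OF S(2)] \<psi> lift_property_image_system[OF S_K] by blast
qed

end
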